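(* On the event $\mathbb{G}_1$, for all episodes $k$, steps $h\in[H]$, states $s$, $B\in[\ell_h]$ and lookahead information $I$, it holds that $\mathfrak{Q}^*_h(s,B;I,V^*_{h+B})\le\mathfrak{Q}^*_h(s,B;I,\bar V^k_{h+B})$; in particular $V^*_h(s)\le\bar V^k_h(s)$.
   Context: Setting: episodic tabular MDP with $S$ states, horizon $H$, rewards in $[0,1]$, unknown distributions independent across time steps. Fix $\ell\ge1$, $\ell_h=\min\{\ell,H-h+1\}$. $I_{h,B}(s)$ is $B$-step lookahead information from $s$ at step $h$ (realized rewards and next states of all state-action pairs reachable from $s$ at steps $h,\dots,h+B-1$), with distribution $\mathcal{I}_{h,B}(s)$. For deterministic Markov $\phi$, $\mathfrak{R}_{t\mid h}(s,\phi,I)$, $\mathfrak{s}_{t\mid h}(s,\phi,I)$ are the reward/state at step $t$ from $s_h=s$ following $\phi$ under $I$; $\mathfrak{Q}^*_h(s,B;I,V)=\max_\phi\{\sum_{t=h}^{h+B-1}\mathfrak{R}_{t\mid h}(s,\phi,I)+V(\mathfrak{s}_{h+B\mid h}(s,\phi,I))\}$. $V^*_h$ is the optimal value of adaptive batching policies, with $V^*_{H+1}\equiv0$, $V^*_h(s)=\max_{B\in[\ell_h]}Q^*_h(s,B)$, $Q^*_h(s,B)=\mathbb{E}_{I\sim\mathcal{I}_{h,B}(s)}[\mathfrak{Q}^*_h(s,B;I,V^*_{h+B})]$, and $\mathrm{Var}^*_h(s,B)$ the variance of $\mathfrak{Q}^*_h(s,B;I,V^*_{h+B})$ under $I\sim\mathcal{I}_{h,B}(s)$.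 AL-UCB notation: $n^k_h(s,B)$ is the number of episodes before $k$ in which a batch with horizon $B$ started at step $h$ in state $s$; $\widehat{\mathbb{E}}^k_{h,s,B}[f(I)]$ is the average of $f$ over the lookahead observed in those episodes (0 if none); $\widehat{\mathrm{Var}}^k_h(s,B;V)$ the corresponding empirical variance of $\mathfrak{Q}^*_h(s,B;I,V)$; $L^k_\delta=\ln\frac{18SH\ell k^3(k+1)}{\delta}$. The optimistic values are $\bar V^k_{H+1}\equiv0$, $b^k_h(s,B)=\sqrt{\frac{8\widehat{\mathrm{Var}}^k_h(s,B;\bar V^k_{h+B})L^k_\delta}{n^k_h(s,B)\vee1}}+\frac{11HL^k_\delta}{n^k_h(s,B)\vee1}$, $\bar Q^k_h(s,B)=\min\{\widehat{\mathbb{E}}^k_{h,s,B}[\mathfrak{Q}^*_h(s,B;I,\bar V^k_{h+B})]+b^k_h(s,B),H-h+1\}$, $\bar V^k_h(s)=\max_{B\in[\ell_h]}\bar Q^k_h(s,B)$. The event $\mathbb{G}_1$ is the intersection over all $k\ge1$ of: (i) for all $s,h,B$: $|Q^*_h(s,B)-\widehat{\mathbb{E}}^k_{h,s,B}[\mathfrak{Q}^*_h(s,B;I,V^*_{h+B})]|\le\sqrt{2\mathrm{Var}^*_h(s,B)L^k_\delta/(n^k_h(s,B)\vee1)}+HL^k_\delta/(n^k_h(s,B)\vee1)$; (ii) for all $s,h,B$: $|\sqrt{\widehat{\mathrm{Var}}^k_h(s,B;V^*_{h+B})}-\sqrt{\mathrm{Var}^*_h(s,B)}|\le4H\sqrt{L^k_\delta/(n^k_h(s,B)\vee1)}$;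 (iii) for all $s,h,B$ and all $V$ with $V^*_{h+B}\le V\le H$ componentwise: $\widehat{\mathbb{E}}^k_{h,s,B}[\mathfrak{Q}^*_h(s,B;I,V)-\mathfrak{Q}^*_h(s,B;I,V^*_{h+B})]\le(1+\frac{1}{2H})\mathbb{E}_{I\sim\mathcal{I}_{h,B}(s)}[\mathfrak{Q}^*_h(s,B;I,V)-\mathfrak{Q}^*_h(s,B;I,V^*_{h+B})]+\frac{4H^2SL^k_\delta}{n^k_h(s,B)\vee1}$. *)

theory Defs
  imports "HOL-Probability.Probability"
begin

text \<open>Realisation of one step of the environment: for every state s and action a,
  the realised reward (first component) and next state (second component).
  A (full) lookahead realisation assigns such a realisation to every time step t.\<close>
type_synonym ('s, 'a) step_real = "'s \<Rightarrow> 'a \<Rightarrow> real \<times> 's"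
type_synonym ('s, 'a) lk = "nat \<Rightarrow> ('s, 'a) step_real"

type_synonym ('s, 'a) policy = "nat \<Rightarrow> 's \<Rightarrow> 'a"

primrec traj :: "('s, 'a) lk \<Rightarrow> ('s, 'a) policy \<Rightarrow> nat \<Rightarrow> 's \<Rightarrow> nat \<Rightarrow> 's" where
  "traj I \<phi> h s 0 = s"
| "traj I \<phi> h s (Suc j) =
     snd (I (h + j) (traj I \<phi> h s j) (\<phi> (h + j) (traj I \<phi> h s j)))"

definition rew :: "('s, 'a) lk \<Rightarrow> ('s, 'a) policy \<Rightarrow> nat \<Rightarrow> 's \<Rightarrow> nat \<Rightarrow> real" where
  "rew I \<phi> h s j = fst (I (h + j) (traj I \<phi> h s j) (\<phi> (h + j) (traj I \<phi> h s j)))"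

definition lkQ :: "('s::finite, 'a::finite) lk \<Rightarrow> nat \<Rightarrow> nat \<Rightarrow> ('s \<Rightarrow> real) \<Rightarrow> 's \<Rightarrow> real" where
  "lkQ I h B V s =
     Max ((\<lambda>\<phi>. (\<Sum>j<B. rew I \<phi> h s j) + V (traj I \<phi> h s B)) ` UNIV)"

text \<open>Backward induction over the remaining number of steps d = H+1-h.
  vtab F l H d j gives the value function at step H+1-j (for j \<le> d), where
  F h B W s is the Q-value of batch B at (h,s) given next value function W = V_(h+B).\<close>
primrec vtab :: "(nat \<Rightarrow> nat \<Rightarrow> ('s \<Rightarrow> real) \<Rightarrow> 's \<Rightarrow> real) \<Rightarrow> nat \<Rightarrow> nat \<Rightarrow> nat
                   \<Rightarrow> nat \<Rightarrow> 's \<Rightarrow> real" where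
  "vtab F l H 0 = (\<lambda>j s. 0)"
| "vtab F l H (Suc d) = (vtab F l H d)(Suc d := (\<lambda>s.
      Max ((\<lambda>B. F (H - d) B (vtab F l H d (Suc d - B)) s) ` {1..min l (Suc d)})))"

text \<open>Value function at step h (1 \<le> h \<le> H+1): V_(H+1) = 0 and
  V_h(s) = max_{B \<in> [l_h]} F h B V_(h+B) s with l_h = min l (H-h+1).\<close>
definition bvalue :: "(nat \<Rightarrow> nat \<Rightarrow> ('s \<Rightarrow> real) \<Rightarrow> 's \<Rightarrow> real) \<Rightarrow> nat \<Rightarrow> nat
                        \<Rightarrow> nat \<Rightarrow> 's \<Rightarrow> real" where
  "bvalue F l H h = vtab F l H (H + 1 - h) (H + 1 - h)"

definition ell_h :: "nat \<Rightarrow> nat \<Rightarrow> nat \<Rightarrow> nat" where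
  "ell_h l H h = min l (H - h + 1)"

definition Idist :: "(nat \<Rightarrow> ('s, 'a) step_real measure) \<Rightarrow> nat \<Rightarrow> nat \<Rightarrow> ('s, 'a) lk measure" where
  "Idist D h B = PiM {h..<h + B} D"

definition Vstar :: "(nat \<Rightarrow> ('s::finite, 'a::finite) step_real measure) \<Rightarrow> nat \<Rightarrow> nat
                       \<Rightarrow> nat \<Rightarrow> 's \<Rightarrow> real" where
  "Vstar D l H = bvalue (\<lambda>h B W s. \<integral>I. lkQ I h B W s \<partial>(Idist D h B)) l H"

definition Qstar :: "(nat \<Rightarrow> ('s::finite, 'a::finite) step_real measure) \<Rightarrow> nat \<Rightarrow> nat
                       \<Rightarrow> nat \<Rightarrow> 's \<Rightarrow> nat \<Rightarrow> real" where
  "Qstar D l H h s B = (\<integral>I. lkQ I h B (Vstar D l H (h + B)) s \<partial>(Idist D h B))"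

definition VarStar :: "(nat \<Rightarrow> ('s::finite, 'a::finite) step_real measure) \<Rightarrow> nat \<Rightarrow> nat
                       \<Rightarrow> nat \<Rightarrow> 's \<Rightarrow> nat \<Rightarrow> real" where
  "VarStar D l H h s B = (\<integral>I. (lkQ I h B (Vstar D l H (h + B)) s - Qstar D l H h s B)\<^sup>2
                             \<partial>(Idist D h B))"

text \<open>Empirical mean (0 on the empty list) and empirical variance.\<close>
definition emp :: "('i \<Rightarrow> real) \<Rightarrow> 'i list \<Rightarrow> real" where
  "emp f xs = (\<Sum>x\<leftarrow>xs. f x) / real (length xs)"

definition empVar :: "('i \<Rightarrow> real) \<Rightarrow> 'i list \<Rightarrow> real" where
  "empVar f xs = emp (\<lambda>x. (f x - emp f xs)\<^sup>2) xs"

text \<open>obs k h s B: the lookahead information observed in the episodes before k in which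
  a batch of horizon B was started at step h in state s; n^k_h(s,B) is its length.\<close>
definition Lk :: "nat \<Rightarrow> nat \<Rightarrow> nat \<Rightarrow> nat \<Rightarrow> real \<Rightarrow> real" where
  "Lk S H l k \<delta> = ln (18 * real S * real H * real l * real k ^ 3 * real (k + 1) / \<delta>)"

definition bonus :: "(nat \<Rightarrow> nat \<Rightarrow> 's::finite \<Rightarrow> nat \<Rightarrow> ('s, 'a::finite) lk list)
                     \<Rightarrow> nat \<Rightarrow> nat \<Rightarrow> real \<Rightarrow> nat \<Rightarrow> nat \<Rightarrow> 's \<Rightarrow> nat \<Rightarrow> ('s \<Rightarrow> real) \<Rightarrow> real" where
  "bonus obs l H \<delta> k h s B W =
     (let n = real (max (length (obs k h s B)) 1); L = Lk CARD('s) H l k \<delta> in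
      sqrt (8 * empVar (\<lambda>I. lkQ I h B W s) (obs k h s B) * L / n) + 11 * real H * L / n)"

definition Qbar_of :: "(nat \<Rightarrow> nat \<Rightarrow> 's::finite \<Rightarrow> nat \<Rightarrow> ('s, 'a::finite) lk list)
                     \<Rightarrow> nat \<Rightarrow> nat \<Rightarrow> real \<Rightarrow> nat \<Rightarrow> nat \<Rightarrow> nat \<Rightarrow> ('s \<Rightarrow> real) \<Rightarrow> 's \<Rightarrow> real" where
  "Qbar_of obs l H \<delta> k h B W s =
     min (emp (\<lambda>I. lkQ I h B W s) (obs k h s B) + bonus obs l H \<delta> k h s B W)
         (real H - real h + 1)"

definition Vbar :: "(nat \<Rightarrow> nat \<Rightarrow> 's::finite \<Rightarrow> nat \<Rightarrow> ('s, 'a::finite) lk list)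
                     \<Rightarrow> nat \<Rightarrow> nat \<Rightarrow> real \<Rightarrow> nat \<Rightarrow> nat \<Rightarrow> 's \<Rightarrow> real" where
  "Vbar obs l H \<delta> k = bvalue (Qbar_of obs l H \<delta> k) l H"

definition G1 :: "(nat \<Rightarrow> ('s::finite, 'a::finite) step_real measure)
                  \<Rightarrow> (nat \<Rightarrow> nat \<Rightarrow> 's \<Rightarrow> nat \<Rightarrow> ('s, 'a) lk list)
                  \<Rightarrow> nat \<Rightarrow> nat \<Rightarrow> real \<Rightarrow> bool" where
  "G1 D obs l H \<delta> \<longleftrightarrow>
    (\<forall>k\<ge>1. \<forall>h\<in>{1..H}. \<forall>s. \<forall>B\<in>{1..ell_h l H h}.
       (let n = real (max (length (obs k h s B)) 1); L = Lk CARD('s) H l k \<delta>;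
            Vs = Vstar D l H (h + B) in
        \<bar>Qstar D l H h s B - emp (\<lambda>I. lkQ I h B Vs s) (obs k h s B)\<bar>
           \<le> sqrt (2 * VarStar D l H h s B * L / n) + real H * L / n
        \<and> \<bar>sqrt (empVar (\<lambda>I. lkQ I h B Vs s) (obs k h s B)) - sqrt (VarStar D l H h s B)\<bar>
           \<le> 4 * real H * sqrt (L / n)
        \<and> (\<forall>V. (\<forall>x. Vs x \<le> V x \<and> V x \<le> real H) \<longrightarrow>
             emp (\<lambda>I. lkQ I h B V s - lkQ I h B Vs s) (obs k h s B)
             \<le> (1 + 1 / (2 * real H)) *
                 (\<integral>I. lkQ I h B V s - lkQ I h B Vs s \<partial>(Idist D h B))
               + 4 * (real H)\<^sup>2 * real CARD('s) * L / n)))"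

end

theory Submission
  imports Defs
begin

text \<open>If V*_(h+B) <= Vbar_(h+B) pointwise, then for every realisation I
  the lookahead value computed with Vbar dominates the one computed with V* (a maximum over
  policies is monotone in the terminal value) and exceeds it by at most H. Parts (i) and (ii) of
  G1 bound Q*_h(s,B) by the empirical mean and standard deviation of the V*-values; by Minkowski's
  inequality the empirical standard deviation of the V*-values exceeds that of the Vbar-values by
  at most sqrt(H d), d the gap between the two empirical means, and AM-GM absorbs the resulting
  cross term into d. So Q*_h(s,B) is at most the empirical mean of the Vbar-values plus the bonus,
  and also at most H-h+1, i.e. at most Qbar_h(s,B); maximising over B gives V*_h <= Vbar_h.\<close>

definition batch_return ::
    "('s, 'a) lk \<Rightarrow> nat \<Rightarrow> nat \<Rightarrow> ('s \<Rightarrow> real) \<Rightarrow> 's \<Rightarrow> ('s, 'a) policy \<Rightarrow> real" where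
  "batch_return I h B V s \<phi> = (\<Sum>j<B. rew I \<phi> h s j) + V (traj I \<phi> h s B)"

lemma lkQ_eq_Max_batch_return: "lkQ I h B V s = Max (range (batch_return I h B V s))"
  unfolding lkQ_def batch_return_def ..

lemma traj_cong:
  "(\<And>t. t \<in> {h..<h + j} \<Longrightarrow> \<phi> t = \<psi> t) \<Longrightarrow> traj I \<phi> h s j = traj I \<psi> h s j"
  by (induction j) auto

lemma batch_return_cong:
  assumes "\<And>t. t \<in> {h..<h + B} \<Longrightarrow> \<phi> t = \<psi> t"
  shows "batch_return I h B V s \<phi> = batch_return I h B V s \<psi>"
proof -
  have "rew I \<phi> h s j = rew I \<psi> h s j" if "j < B" for j
    using that assms traj_cong[of h j \<phi> \<psi>] by (simp add: rew_def)
  moreover have "traj I \<phi> h s B = traj I \<psi> h s B"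
    using assms by (rule traj_cong)
  ultimately show ?thesis
    unfolding batch_return_def by simp
qed

lemma finite_range_batch_return:
  "finite (range (batch_return (I :: ('s::finite, 'a::finite) lk) h B V s))"
proof -
  let ?restr = "\<lambda>\<phi>. restrict \<phi> {h..<h + B}"
  have "batch_return I h B V s \<circ> ?restr = batch_return I h B V s"
    by (rule ext, simp, rule batch_return_cong) simp
  then have "range (batch_return I h B V s) = batch_return I h B V s ` range ?restr"
    by (metis image_comp)
  moreover have "range ?restr \<subseteq> PiE {h..<h + B} (\<lambda>_. UNIV)"
    by auto
  ultimately show ?thesis
    by (metis finite_PiE finite_atLeastLessThan finite_imageI finite_subset finite)
qed

lemma batch_return_le_lkQ: "batch_return I h B V s \<phi> \<le> lkQ I h B V s"
  unfolding lkQ_eq_Max_batch_return by (rule Max_ge[OF finite_range_batch_return]) simp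

lemma lkQ_le_iff: "lkQ I h B V s \<le> c \<longleftrightarrow> (\<forall>\<phi>. batch_return I h B V s \<phi> \<le> c)"
  unfolding lkQ_eq_Max_batch_return using finite_range_batch_return[of I h B V s] by simp

lemma lkQ_mono_offset:
  assumes "\<And>x. V x \<le> W x + c"
  shows "lkQ I h B V s \<le> lkQ I h B W s + c"
  unfolding lkQ_le_iff
proof
  fix \<phi>
  have "batch_return I h B V s \<phi> \<le> batch_return I h B W s \<phi> + c"
    using assms by (simp add: batch_return_def)
  then show "batch_return I h B V s \<phi> \<le> lkQ I h B W s + c"
    using batch_return_le_lkQ[of I h B W s \<phi>] by linarith
qed

lemma lkQ_mono: "(\<And>x. V x \<le> W x) \<Longrightarrow> lkQ I h B V s \<le> lkQ I h B W s"
  using lkQ_mono_offset[of V W 0] by simp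

lemma lkQ_bounds:
  assumes "\<And>t x a. t \<in> {h..<h + B} \<Longrightarrow> fst (I t x a) \<in> {0..1}"
    and "\<And>x. V x \<in> {0..c}"
  shows "lkQ I h B V s \<in> {0..real B + c}"
proof -
  have return_bounds: "0 \<le> batch_return I h B V s \<phi> \<and> batch_return I h B V s \<phi> \<le> real B + c"
    for \<phi>
  proof -
    have rew_bounds: "0 \<le> rew I \<phi> h s j \<and> rew I \<phi> h s j \<le> 1" if "j \<in> {..<B}" for j
      using that assms(1)[of "h + j"] by (simp add: rew_def)
    have "0 \<le> (\<Sum>j<B. rew I \<phi> h s j)"
      using rew_bounds by (intro sum_nonneg) blast
    moreover have "(\<Sum>j<B. rew I \<phi> h s j) \<le> real B"
      using rew_bounds sum_bounded_above[of "{..<B}" "rew I \<phi> h s" 1] by simp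
    moreover have "0 \<le> V (traj I \<phi> h s B) \<and> V (traj I \<phi> h s B) \<le> c"
      using assms(2) by simp
    ultimately show ?thesis
      unfolding batch_return_def by linarith
  qed
  then have "lkQ I h B V s \<le> real B + c"
    unfolding lkQ_le_iff by blast
  moreover have "0 \<le> lkQ I h B V s"
    using return_bounds[of undefined] batch_return_le_lkQ[of I h B V s undefined] by linarith
  ultimately show ?thesis
    by simp
qed

lemma vtab_stable: "j \<le> d \<Longrightarrow> vtab F l H d j = vtab F l H j j"
  by (induction d) (auto simp: le_Suc_eq)

lemma bvalue_last: "bvalue F l H (H + 1) = (\<lambda>s. 0)"
  by (simp add: bvalue_def)

lemma bvalue_rec:
  assumes "1 \<le> h" "h \<le> H"
  shows "bvalue F l H h s = Max ((\<lambda>B. F h B (bvalue F l H (h + B)) s) ` {1..ell_h l H h})"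
proof -
  define d where "d = H - h"
  have d: "H + 1 - h = Suc d" "H - d = h" "Suc H - h = Suc d" "ell_h l H h = min l (Suc d)"
    using assms by (auto simp: d_def ell_h_def)
  have "vtab F l H d (Suc d - B) = bvalue F l H (h + B)" if "B \<in> {1..min l (Suc d)}" for B
  proof -
    have "H + 1 - (h + B) = Suc d - B"
      using d(1) by simp
    then show ?thesis
      using that by (auto simp: bvalue_def intro!: vtab_stable)
  qed
  then have "(\<lambda>B. F h B (vtab F l H d (Suc d - B)) s) ` {1..min l (Suc d)}
      = (\<lambda>B. F h B (bvalue F l H (h + B)) s) ` {1..ell_h l H h}"
    unfolding d(4) by (intro image_cong) auto
  then show ?thesis
    by (simp add: bvalue_def d(1-3))
qed

lemma Max_image_attained:
  assumes "finite A" "A \<noteq> {}"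
  obtains x where "x \<in> A" "Max (f ` A) = f x"
proof -
  have "Max (f ` A) \<in> f ` A"
    using assms by (intro Max_in) auto
  then show thesis
    using that by blast
qed

lemma batch_horizons_nonempty: "1 \<le> l \<Longrightarrow> h \<le> H \<Longrightarrow> {1..ell_h l H h} \<noteq> {}"
  by (simp add: ell_h_def)

lemma batch_horizon_le: "h \<le> H \<Longrightarrow> B \<in> {1..ell_h l H h} \<Longrightarrow> h + B \<le> H + 1"
  unfolding ell_h_def by auto

lemma batch_backward_induct[consumes 2, case_names last step]:
  assumes "1 \<le> h" "h \<le> H + 1"
    and last: "P (H + 1)"
    and step: "\<And>h. 1 \<le> h \<Longrightarrow> h \<le> H \<Longrightarrow> (\<And>B. B \<in> {1..ell_h l H h} \<Longrightarrow> P (h + B)) \<Longrightarrow> P h"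
  shows "P h"
  using assms(1,2)
proof (induction "H + 1 - h" arbitrary: h rule: less_induct)
  case less
  show ?case
  proof (cases "h = H + 1")
    case False
    then have "h \<le> H"
      using less.prems by simp
    show ?thesis
    proof (rule step[OF less.prems(1) \<open>h \<le> H\<close>])
      fix B assume "B \<in> {1..ell_h l H h}"
      then have "H + 1 - (h + B) < H + 1 - h" "1 \<le> h + B" "h + B \<le> H + 1"
        using \<open>h \<le> H\<close> by (auto simp: ell_h_def)
      then show "P (h + B)"
        by (rule less.hyps)
    qed
  next
    case True
    show ?thesis
      unfolding True by (rule last)
  qed
qed

lemma Vstar_last: "Vstar D l H (H + 1) s = 0"
  unfolding Vstar_def bvalue_last ..

lemma Vbar_last: "Vbar obs l H \<delta> k (H + 1) s = 0"
  unfolding Vbar_def bvalue_last ..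

lemma Vstar_rec:
  "1 \<le> h \<Longrightarrow> h \<le> H \<Longrightarrow> Vstar D l H h s = Max ((\<lambda>B. Qstar D l H h s B) ` {1..ell_h l H h})"
  unfolding Vstar_def Qstar_def by (rule bvalue_rec)

lemma Vbar_rec:
  "1 \<le> h \<Longrightarrow> h \<le> H \<Longrightarrow> Vbar obs l H \<delta> k h s
     = Max ((\<lambda>B. Qbar_of obs l H \<delta> k h B (Vbar obs l H \<delta> k (h + B)) s) ` {1..ell_h l H h})"
  unfolding Vbar_def by (rule bvalue_rec)

lemma Vbar_le:
  assumes "1 \<le> l" "1 \<le> h" "h \<le> H + 1"
  shows "Vbar obs l H \<delta> k h s \<le> real (H + 1 - h)"
proof (cases "h = H + 1")
  case False
  then have "h \<le> H"
    using assms by simp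
  obtain B where "B \<in> {1..ell_h l H h}"
    and "Vbar obs l H \<delta> k h s = Qbar_of obs l H \<delta> k h B (Vbar obs l H \<delta> k (h + B)) s"
    unfolding Vbar_rec[OF assms(2) \<open>h \<le> H\<close>]
    using finite_atLeastAtMost batch_horizons_nonempty[OF assms(1) \<open>h \<le> H\<close>]
    by (rule Max_image_attained)
  then show ?thesis
    using \<open>h \<le> H\<close> by (simp add: Qbar_of_def of_nat_diff)
next
  case True
  then show ?thesis
    unfolding True Vbar_last by simp
qed

lemma emp_mono: "(\<And>x. x \<in> set xs \<Longrightarrow> f x \<le> g x) \<Longrightarrow> emp f xs \<le> emp g xs"
  unfolding emp_def by (intro divide_right_mono sum_list_mono) auto

lemma emp_add: "emp (\<lambda>x. f x + g x) xs = emp f xs + emp g xs"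
  unfolding emp_def by (simp add: sum_list_addf add_divide_distrib)

lemma emp_diff: "emp (\<lambda>x. f x - g x) xs = emp f xs - emp g xs"
  unfolding emp_def by (simp add: sum_list_subtractf diff_divide_distrib)

lemma emp_mult_left: "emp (\<lambda>x. c * f x) xs = c * emp f xs"
  unfolding emp_def by (simp add: sum_list_const_mult)

lemma emp_const: "xs \<noteq> [] \<Longrightarrow> emp (\<lambda>_. c) xs = c"
  unfolding emp_def by (simp add: sum_list_triv)

lemma empVar_nonneg: "0 \<le> empVar f xs"
  unfolding empVar_def emp_def by (intro divide_nonneg_nonneg sum_list_nonneg) auto

lemma empVar_le_emp_sq_dev: "empVar f xs \<le> emp (\<lambda>x. (f x - c)\<^sup>2) xs"
proof (cases "xs = []")
  case False
  let ?m = "emp f xs"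
  have "emp (\<lambda>x. (f x - c)\<^sup>2) xs
      = emp (\<lambda>x. (f x - ?m)\<^sup>2 + 2 * (?m - c) * (f x - ?m) + (?m - c)\<^sup>2) xs"
    by (intro arg_cong[where f = "\<lambda>F. emp F xs"] ext) (simp add: power2_eq_square algebra_simps)
  also have "\<dots> = empVar f xs + 2 * (?m - c) * (?m - ?m) + (?m - c)\<^sup>2"
    by (simp only: emp_add emp_mult_left emp_diff emp_const[OF False] empVar_def)
  finally show ?thesis
    by simp
qed (simp add: empVar_def emp_def)

lemma sqrt_emp_sq_triangle:
  "sqrt (emp (\<lambda>x. (u x + v x)\<^sup>2) xs)
     \<le> sqrt (emp (\<lambda>x. (u x)\<^sup>2) xs) + sqrt (emp (\<lambda>x. (v x)\<^sup>2) xs)"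
proof -
  have L2: "sqrt (emp (\<lambda>x. (w x)\<^sup>2) xs) = L2_set (\<lambda>i. w (xs ! i)) {..<length xs} / sqrt (length xs)"
    for w :: "'a \<Rightarrow> real"
    unfolding emp_def L2_set_def by (simp add: sum_list_sum_nth atLeast0LessThan real_sqrt_divide)
  show ?thesis
    unfolding L2 add_divide_distrib[symmetric]
    by (intro divide_right_mono L2_set_triangle_ineq) simp
qed

lemma sqrt_empVar_le:
  assumes "\<And>x. x \<in> set xs \<Longrightarrow> f x \<le> g x \<and> g x \<le> f x + M"
  shows "sqrt (empVar f xs) \<le> sqrt (empVar g xs) + sqrt (M * (emp g xs - emp f xs))"
proof -
  let ?m = "emp g xs"
  have "sqrt (empVar f xs) \<le> sqrt (emp (\<lambda>x. ((g x - ?m) + (f x - g x))\<^sup>2) xs)"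
    using empVar_le_emp_sq_dev[of f xs ?m] by simp
  also have "\<dots> \<le> sqrt (empVar g xs) + sqrt (emp (\<lambda>x. (f x - g x)\<^sup>2) xs)"
    unfolding empVar_def by (rule sqrt_emp_sq_triangle)
  also have "emp (\<lambda>x. (f x - g x)\<^sup>2) xs \<le> emp (\<lambda>x. M * (g x - f x)) xs"
  proof (rule emp_mono)
    fix x assume "x \<in> set xs"
    then have "0 \<le> g x - f x" "g x - f x \<le> M"
      using assms by fastforce+
    have "(f x - g x)\<^sup>2 = (g x - f x) * (g x - f x)"
      by (simp add: power2_eq_square algebra_simps)
    also have "\<dots> \<le> M * (g x - f x)"
      using \<open>0 \<le> g x - f x\<close> \<open>g x - f x \<le> M\<close> by (rule mult_right_mono[rotated])
    finally show "(f x - g x)\<^sup>2 \<le> M * (g x - f x)" .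
  qed
  finally show ?thesis
    by (simp add: emp_mult_left emp_diff)
qed

lemma le_empirical_mean_plus_bonus:
  fixes Q ef eg vs vf vg H L n :: real
  assumes "0 \<le> L" "0 < n" "0 \<le> H" "0 \<le> vg" "ef \<le> eg"
    and mean: "Q - ef \<le> sqrt (2 * vs * L / n) + H * L / n"
    and var: "sqrt vs \<le> sqrt vf + 4 * H * sqrt (L / n)"
    and var_emp: "sqrt vf \<le> sqrt vg + sqrt (H * (eg - ef))"
  shows "Q \<le> eg + (sqrt (8 * vg * L / n) + 11 * H * L / n)"
proof -
  define a where "a = sqrt (L / n)"
  have a: "0 \<le> a" "a\<^sup>2 = L / n"
    using assms by (auto simp: a_def)
  have "sqrt 2 \<le> sqrt ((3 / 2)\<^sup>2 :: real)"
    by (simp add: power2_eq_square)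
  then have sqrt2: "sqrt 2 \<le> 3 / 2"
    by simp
  have "sqrt (2 * (eg - ef) * (H * a\<^sup>2)) \<le> (2 * (eg - ef) + H * a\<^sup>2) / 2"
    using assms a by (intro arith_geo_mean_sqrt) simp_all
  moreover have "sqrt (2 * (eg - ef) * (H * a\<^sup>2)) = sqrt (2 * a\<^sup>2 * (H * (eg - ef)))"
    by (simp only: ac_simps)
  moreover have "\<dots> = sqrt 2 * a * sqrt (H * (eg - ef))"
    using a(1) by (simp only: real_sqrt_mult real_sqrt_abs abs_of_nonneg)
  ultimately have amgm: "sqrt 2 * a * sqrt (H * (eg - ef)) \<le> (eg - ef) + H * a\<^sup>2 / 2"
    by simp
  have "sqrt (2 * vs * L / n) = sqrt 2 * a * sqrt vs"
    unfolding a_def real_sqrt_mult[symmetric] by (simp add: ac_simps)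
  moreover have "H * L / n = H * a\<^sup>2"
    using a by simp
  ultimately have "Q \<le> ef + sqrt 2 * a * sqrt vs + H * a\<^sup>2"
    using mean by simp
  also have "\<dots> \<le> ef + sqrt 2 * a * (sqrt vg + sqrt (H * (eg - ef)) + 4 * H * a) + H * a\<^sup>2"
  proof -
    have "sqrt vs \<le> sqrt vg + sqrt (H * (eg - ef)) + 4 * H * a"
      using var var_emp by (simp add: a_def)
    then show ?thesis
      using a(1) by (simp add: mult_left_mono)
  qed
  also have "\<dots> \<le> eg + sqrt 2 * a * sqrt vg + (3 / 2 + 4 * sqrt 2) * (H * a\<^sup>2)"
  proof -
    have "sqrt 2 * a * (sqrt vg + sqrt (H * (eg - ef)) + 4 * H * a)
        = sqrt 2 * a * sqrt vg + sqrt 2 * a * sqrt (H * (eg - ef)) + 4 * sqrt 2 * (H * a\<^sup>2)"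
      by (simp add: distrib_left power2_eq_square ac_simps)
    then show ?thesis
      using amgm by (simp add: distrib_right)
  qed
  also have "\<dots> \<le> eg + 2 * sqrt 2 * a * sqrt vg + 11 * (H * a\<^sup>2)"
  proof -
    have "0 \<le> sqrt 2 * a * sqrt vg" "0 \<le> H * a\<^sup>2"
      using assms a by simp_all
    then have "(3 / 2 + 4 * sqrt 2) * (H * a\<^sup>2) \<le> 11 * (H * a\<^sup>2)"
      using sqrt2 by (intro mult_right_mono) auto
    then show ?thesis
      using \<open>0 \<le> sqrt 2 * a * sqrt vg\<close> by linarith
  qed
  also have "2 * sqrt 2 * a * sqrt vg = sqrt (8 * vg * L / n)"
  proof -
    have "sqrt (8 :: real) = 2 * sqrt 2"
      using real_sqrt_mult[of 4 2] by simp
    have "sqrt (8 * vg * L / n) = sqrt 8 * sqrt vg * sqrt (L / n)"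
      by (simp only: times_divide_eq_right[symmetric] real_sqrt_mult)
    then show ?thesis
      using \<open>sqrt 8 = 2 * sqrt 2\<close> by (simp add: a_def)
  qed
  finally show ?thesis
    using a by simp
qed

lemma Lk_nonneg:
  assumes "0 < \<delta>" "\<delta> \<le> 1"
  shows "0 \<le> Lk S H l k \<delta>"
proof -
  define N where "N = 18 * S * H * l * k ^ 3 * (k + 1)"
  have Lk: "Lk S H l k \<delta> = ln (real N / \<delta>)"
    by (simp only: Lk_def N_def of_nat_mult of_nat_power of_nat_numeral)
  consider "N = 0" | "1 \<le> N"
    by linarith
  then show ?thesis
  proof cases
    case 2
    then have "1 \<le> real N / \<delta>"
      using assms by (simp add: le_divide_eq_1_pos)
    then show ?thesis
      unfolding Lk by simp
  qed (simp add: Lk)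
qed

text \<open>No integrability hypothesis: a non-integrable function has integral 0.\<close>

lemma (in prob_space) integral_in_bounds:
  fixes f :: "'a \<Rightarrow> real"
  assumes "AE x in M. f x \<in> {0..c}" "0 \<le> c"
  shows "integral\<^sup>L M f \<in> {0..c}"
proof (cases "integrable M f")
  case True
  have "AE x in M. 0 \<le> f x" "AE x in M. f x \<le> c"
    using assms(1) by auto
  then show ?thesis
    using integral_nonneg_AE integral_le_const[OF True] by simp
qed (simp add: not_integrable_integral_eq assms)

locale lookahead_model =
  fixes D :: "nat \<Rightarrow> ('s::finite, 'a::finite) step_real measure" and H :: nat
  assumes prob_space_D: "\<And>t. t \<in> {1..H} \<Longrightarrow> prob_space (D t)"
    and rewards_in_unit: "\<And>t s a. t \<in> {1..H} \<Longrightarrow> AE x in D t. fst (x s a) \<in> {0..1}"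
begin

lemma prob_space_Idist: "1 \<le> h \<Longrightarrow> h + B \<le> H + 1 \<Longrightarrow> prob_space (Idist D h B)"
  unfolding Idist_def by (intro prob_space_PiM prob_space_D) auto

lemma AE_Idist_rewards_in_unit:
  assumes "1 \<le> h" "h + B \<le> H + 1"
  shows "AE I in Idist D h B. \<forall>t\<in>{h..<h + B}. \<forall>x a. fst (I t x a) \<in> {0..1}"
  unfolding Idist_def
proof (rule eventually_ball_finite, simp, rule ballI)
  fix t assume t: "t \<in> {h..<h + B}"
  then have "t \<in> {1..H}"
    using assms by auto
  then have "AE y in D t. \<forall>x a. fst (y x a) \<in> {0..1}"
    by (intro eventually_all_finite rewards_in_unit)
  then show "AE I in PiM {h..<h + B} D. \<forall>x a. fst (I t x a) \<in> {0..1}"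
    using assms by (intro AE_PiM_component[OF prob_space_D t]) auto
qed

lemma integral_lkQ_bounds:
  assumes "1 \<le> h" "h + B \<le> H + 1" "\<And>x. V x \<in> {0..real (H + 1 - (h + B))}"
  shows "(\<integral>I. lkQ I h B V s \<partial>Idist D h B) \<in> {0..real (H + 1 - h)}"
proof -
  interpret prob_space "Idist D h B"
    using assms(1,2) by (rule prob_space_Idist)
  have horizon: "real B + real (H + 1 - (h + B)) = real (H + 1 - h)"
    using assms by (simp add: of_nat_diff)
  have "AE I in Idist D h B. lkQ I h B V s \<in> {0..real (H + 1 - h)}"
    using AE_Idist_rewards_in_unit[OF assms(1,2)]
  proof eventually_elim
    case (elim I)
    then show ?case
      using lkQ_bounds[of h B I V "real (H + 1 - (h + B))" s] assms(3) horizon by simp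
  qed
  then show ?thesis
    by (rule integral_in_bounds) simp
qed

lemma Vstar_bounds:
  assumes "1 \<le> l" "1 \<le> h" "h \<le> H + 1"
  shows "Vstar D l H h s \<in> {0..real (H + 1 - h)}"
  using assms(2,3)
proof (induction h arbitrary: s rule: batch_backward_induct[where l = l])
  case last
  show ?case
    unfolding Vstar_last by simp
next
  case (step h)
  obtain B where B: "B \<in> {1..ell_h l H h}" and Vstar_eq: "Vstar D l H h s = Qstar D l H h s B"
    unfolding Vstar_rec[OF step(1,2)]
    using finite_atLeastAtMost batch_horizons_nonempty[OF assms(1) step(2)]
    by (rule Max_image_attained)
  have "Vstar D l H (h + B) x \<in> {0..real (H + 1 - (h + B))}" for x
    using B by (rule step(3))
  then show ?case
    unfolding Vstar_eq Qstar_def using step(1) batch_horizon_le[OF step(2) B]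
    by (intro integral_lkQ_bounds)
qed

lemma Qstar_bounds:
  assumes "1 \<le> l" "h \<in> {1..H}" "B \<in> {1..ell_h l H h}"
  shows "Qstar D l H h s B \<in> {0..real (H + 1 - h)}"
  unfolding Qstar_def using assms batch_horizon_le[of h H B l]
  by (intro integral_lkQ_bounds Vstar_bounds) auto

end

locale optimism_setting = lookahead_model D H
    for D :: "nat \<Rightarrow> ('s::finite, 'a::finite) step_real measure" and H :: nat +
  fixes obs :: "nat \<Rightarrow> nat \<Rightarrow> 's \<Rightarrow> nat \<Rightarrow> ('s, 'a) lk list"
    and l k :: nat and \<delta> :: real
  assumes G1: "G1 D obs l H \<delta>"
    and l: "1 \<le> l" and k: "1 \<le> k" and \<delta>: "0 < \<delta>" "\<delta> \<le> 1"
begin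

lemma Qstar_le_Qbar:
  assumes h: "h \<in> {1..H}" and B: "B \<in> {1..ell_h l H h}"
    and optimistic: "\<And>x. Vstar D l H (h + B) x \<le> Vbar obs l H \<delta> k (h + B) x"
  shows "Qstar D l H h s B \<le> Qbar_of obs l H \<delta> k h B (Vbar obs l H \<delta> k (h + B)) s"
proof -
  define Vs where "Vs = Vstar D l H (h + B)"
  define Vb where "Vb = Vbar obs l H \<delta> k (h + B)"
  define xs where "xs = obs k h s B"
  define n where "n = real (max (length xs) 1)"
  define L where "L = Lk CARD('s) H l k \<delta>"
  define f where "f = (\<lambda>I :: ('s, 'a) lk. lkQ I h B Vs s)"
  define g where "g = (\<lambda>I :: ('s, 'a) lk. lkQ I h B Vb s)"
  have hB: "1 \<le> h + B" "h + B \<le> H + 1"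
    using h B batch_horizon_le[of h H B l] by auto
  have mean_conc: "\<bar>Qstar D l H h s B - emp f xs\<bar>
      \<le> sqrt (2 * VarStar D l H h s B * L / n) + real H * L / n"
    and var_conc: "\<bar>sqrt (empVar f xs) - sqrt (VarStar D l H h s B)\<bar> \<le> 4 * real H * sqrt (L / n)"
    using G1 k h B unfolding G1_def Let_def xs_def n_def L_def f_def Vs_def by blast+
  have f_g: "f I \<le> g I \<and> g I \<le> f I + real H" for I
  proof -
    have "real (H + 1 - (h + B)) \<le> real H"
      using hB by simp
    then have "Vb x \<le> Vs x + real H" for x
      using Vbar_le[OF l hB, where obs = obs and \<delta> = \<delta> and k = k and s = x]
        Vstar_bounds[OF l hB, where s = x]
      unfolding Vs_def Vb_def by simp
    then show ?thesis
      unfolding f_def g_def Vs_def Vb_def using optimistic by (auto intro: lkQ_mono lkQ_mono_offset)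
  qed
  have emp_var:
    "sqrt (empVar f xs) \<le> sqrt (empVar g xs) + sqrt (real H * (emp g xs - emp f xs))"
    using f_g by (intro sqrt_empVar_le)
  have emp_le: "emp f xs \<le> emp g xs"
    using f_g by (intro emp_mono) blast
  have "Qstar D l H h s B \<le> emp g xs + (sqrt (8 * empVar g xs * L / n) + 11 * real H * L / n)"
  proof (rule le_empirical_mean_plus_bonus)
    show "0 \<le> L" "0 < n"
      using Lk_nonneg[OF \<delta>] by (simp_all add: L_def n_def)
    show "Qstar D l H h s B - emp f xs \<le> sqrt (2 * VarStar D l H h s B * L / n) + real H * L / n"
      using mean_conc by simp
    show "sqrt (VarStar D l H h s B) \<le> sqrt (empVar f xs) + 4 * real H * sqrt (L / n)"
      using var_conc by simp
  qed (use emp_var emp_le empVar_nonneg in simp_all)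
  moreover have "Qstar D l H h s B \<le> real H - real h + 1"
    using Qstar_bounds[OF l h B, where s = s] h by (simp add: of_nat_diff)
  ultimately show ?thesis
    unfolding Qbar_of_def bonus_def Let_def g_def xs_def n_def L_def Vb_def by simp
qed

lemma Vstar_le_Vbar:
  assumes "1 \<le> h" "h \<le> H + 1"
  shows "Vstar D l H h s \<le> Vbar obs l H \<delta> k h s"
  using assms
proof (induction h arbitrary: s rule: batch_backward_induct[where l = l])
  case last
  show ?case
    unfolding Vstar_last Vbar_last by simp
next
  case (step h)
  obtain B where B: "B \<in> {1..ell_h l H h}" and Vstar_eq: "Vstar D l H h s = Qstar D l H h s B"
    unfolding Vstar_rec[OF step(1,2)]
    using finite_atLeastAtMost batch_horizons_nonempty[OF l step(2)]
    by (rule Max_image_attained)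
  have "Qstar D l H h s B \<le> Qbar_of obs l H \<delta> k h B (Vbar obs l H \<delta> k (h + B)) s"
    using step B by (intro Qstar_le_Qbar) auto
  also have "\<dots> \<le> Vbar obs l H \<delta> k h s"
    unfolding Vbar_rec[OF step(1,2)] using B by (intro Max_ge) auto
  finally show ?case
    unfolding Vstar_eq .
qed

end

theorem lemma3:
  fixes D :: "nat \<Rightarrow> ('s::finite, 'a::finite) step_real measure"
    and obs :: "nat \<Rightarrow> nat \<Rightarrow> 's \<Rightarrow> nat \<Rightarrow> ('s, 'a) lk list"
    and H l :: nat and \<delta> :: real
  assumes "H \<ge> 1" and "l \<ge> 1" and "0 < \<delta>" and "\<delta> < 1"
    and "\<And>t. t \<in> {1..H} \<Longrightarrow> prob_space (D t)"
    and "\<And>t s a. t \<in> {1..H} \<Longrightarrow> (\<lambda>x. fst (x s a)) \<in> borel_measurable (D t)"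
    and "\<And>t s a. t \<in> {1..H} \<Longrightarrow> (\<lambda>x. snd (x s a)) \<in> D t \<rightarrow>\<^sub>M count_space UNIV"
    and "\<And>t s a. t \<in> {1..H} \<Longrightarrow> AE x in D t. fst (x s a) \<in> {0..1}"
    and "G1 D obs l H \<delta>"
  shows "(\<forall>k\<ge>1. \<forall>h\<in>{1..H}. \<forall>s. \<forall>B\<in>{1..ell_h l H h}. \<forall>I :: ('s, 'a) lk.
           lkQ I h B (Vstar D l H (h + B)) s \<le> lkQ I h B (Vbar obs l H \<delta> k (h + B)) s)
     \<and> (\<forall>k\<ge>1. \<forall>h\<in>{1..H}. \<forall>s. Vstar D l H h s \<le> Vbar obs l H \<delta> k h s)"
proof -
  have setting: "optimism_setting D H obs l k \<delta>" if "1 \<le> k" for k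
    using assms that
    by (intro optimism_setting.intro lookahead_model.intro optimism_setting_axioms.intro) simp_all
  have optimism: "Vstar D l H h s \<le> Vbar obs l H \<delta> k h s"
    if "1 \<le> k" "1 \<le> h" "h \<le> H + 1" for k h s
    using setting[OF that(1)] that(2,3) by (rule optimism_setting.Vstar_le_Vbar)
  show ?thesis
  proof (intro conjI allI impI ballI)
    fix k h B :: nat and s :: 's and I :: "('s, 'a) lk"
    assume "1 \<le> k" "h \<in> {1..H}" "B \<in> {1..ell_h l H h}"
    then show "lkQ I h B (Vstar D l H (h + B)) s \<le> lkQ I h B (Vbar obs l H \<delta> k (h + B)) s"
      using batch_horizon_le[of h H B l] by (intro lkQ_mono optimism) auto
  next
    fix k h :: nat and s :: 's
    assume "1 \<le> k" "h \<in> {1..H}"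
    then show "Vstar D l H h s \<le> Vbar obs l H \<delta> k h s"
      by (intro optimism) auto
  qed
qed

end
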